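(* The restrictions of $g$ to $\Omega_2$, $\Omega_3$ and $\Omega_-$ are Lipschitz on bounded sets. More precisely, for every $\bar M>0$ there is a constant $C(\bar M)$ such that $$|g(x)-g(\tilde x)|\le C(\bar M)\big(|Z-\tilde Z|+(|x_7|+|\tilde x_7|)|x_8-\tilde x_8|\big)$$ whenever $x,\tilde x$ both lie in $\Omega_2$, or both lie in $\Omega_3$, or both lie in $\Omega_-$, and all components of $x$ and $\tilde x$ are bounded in absolute value by $\bar M$. Here $Z=(x_4,x_5,x_6,x_7)$, $\tilde Z=(\tilde x_4,\tilde x_5,\tilde x_6,\tilde x_7)$.
   Context: For $x=(x_1,\dots,x_8)\in\mathbb R^8$ let $g_1(x)=|x_5|+2|x_7x_8|+2x_4$, $g_2(x)=x_4+x_6$, $\Omega_1=\{x: g_1(x)\le g_2(x),\ x_5\le0,\ x_7+x_8x_4=0\}$, and $g(x)=g_1(x)$ for $x\in\Omega_1$, $g(x)=g_2(x)$ otherwise. Let $\Omega_2=(\mathbb R^8\setminus\Omega_1)\cap\{x:x_7+x_8x_4=0\}$, $\Omega_3=\{x:x_7+x_8x_4\ne0\}$, $\Omega_-=\{x: x_5\le0,\ x_7+x_8x_4=0\}$. $|\cdot|$ denotes the Euclidean norm. (In the paper's notation $x=(y,\bar U,c,y_\xi,U_\xi,h,\bar r,k)$.) *)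

theory Defs
  imports "HOL-Analysis.Analysis"
begin

definition g1 :: "real ^ 8 \<Rightarrow> real" where
  "g1 x = \<bar>x$5\<bar> + 2 * \<bar>x$7 * x$8\<bar> + 2 * x$4"

definition g2 :: "real ^ 8 \<Rightarrow> real" where
  "g2 x = x$4 + x$6"

definition Omega1 :: "(real ^ 8) set" where
  "Omega1 = {x. g1 x \<le> g2 x \<and> x$5 \<le> 0 \<and> x$7 + x$8 * x$4 = 0}"

definition g :: "real ^ 8 \<Rightarrow> real" where
  "g x = (if x \<in> Omega1 then g1 x else g2 x)"

definition Omega2 :: "(real ^ 8) set" where
  "Omega2 = (UNIV - Omega1) \<inter> {x. x$7 + x$8 * x$4 = 0}"

definition Omega3 :: "(real ^ 8) set" where
  "Omega3 = {x. x$7 + x$8 * x$4 \<noteq> 0}"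

definition Omega_minus :: "(real ^ 8) set" where
  "Omega_minus = {x. x$5 \<le> 0 \<and> x$7 + x$8 * x$4 = 0}"

definition Zdist :: "real ^ 8 \<Rightarrow> real ^ 8 \<Rightarrow> real" where
  "Zdist x y = sqrt ((x$4 - y$4)^2 + (x$5 - y$5)^2 + (x$6 - y$6)^2 + (x$7 - y$7)^2)"

end

theory Submission
  imports Defs
begin

text \<open>Off \<open>Omega1\<close> the function \<open>g\<close> is the linear function \<open>g2\<close>, and on \<open>Omega_minus\<close> it is
  \<open>min g1 g2\<close>; both \<open>g1\<close> and \<open>g2\<close> are Lipschitz in the sense of the theorem, the only nonlinear
  term being \<open>x7 x8\<close>, whose increment is \<open>(x7 - y7) x8 + y7 (x8 - y8)\<close>. Taking a minimum does
  not increase a Lipschitz bound.\<close>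

definition Zdist_weighted :: "real ^ 8 \<Rightarrow> real ^ 8 \<Rightarrow> real" where
  "Zdist_weighted x y = Zdist x y + (\<bar>x$7\<bar> + \<bar>y$7\<bar>) * \<bar>x$8 - y$8\<bar>"

lemma abs_diff_le_Zdist:
  fixes x y :: "real ^ 8"
  shows "\<bar>x$4 - y$4\<bar> \<le> Zdist x y" "\<bar>x$5 - y$5\<bar> \<le> Zdist x y"
    and "\<bar>x$6 - y$6\<bar> \<le> Zdist x y" "\<bar>x$7 - y$7\<bar> \<le> Zdist x y"
  unfolding Zdist_def by (rule real_le_rsqrt, simp add: power2_abs)+

lemma Zdist_le_Zdist_weighted: "Zdist x y \<le> Zdist_weighted x y"
  unfolding Zdist_weighted_def by simp

lemma Zdist_weighted_nonneg: "0 \<le> Zdist_weighted x y"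
  unfolding Zdist_weighted_def Zdist_def by simp

lemma abs_min_diff_le:
  fixes a b c d :: "'a :: linordered_idom"
  assumes "\<bar>a - c\<bar> \<le> K" and "\<bar>b - d\<bar> \<le> K"
  shows "\<bar>min a b - min c d\<bar> \<le> K"
  using assms by (simp add: abs_le_iff min_def)

lemma abs_add3_le:
  fixes a b c :: "'a :: linordered_idom"
  shows "\<bar>a + b + c\<bar> \<le> \<bar>a\<bar> + \<bar>b\<bar> + \<bar>c\<bar>"
  by (meson abs_triangle_ineq add_right_mono order_trans)

lemma abs_mult_diff_le:
  fixes a b c d :: "'a :: linordered_idom"
  assumes "\<bar>b\<bar> \<le> M"
  shows "\<bar>a * b - c * d\<bar> \<le> M * \<bar>a - c\<bar> + (\<bar>a\<bar> + \<bar>c\<bar>) * \<bar>b - d\<bar>"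
proof -
  have "a * b - c * d = (a - c) * b + c * (b - d)" by (simp add: algebra_simps)
  then have "\<bar>a * b - c * d\<bar> \<le> \<bar>a - c\<bar> * \<bar>b\<bar> + \<bar>c\<bar> * \<bar>b - d\<bar>"
    using abs_triangle_ineq[of "(a - c) * b" "c * (b - d)"] by (simp add: abs_mult)
  also have "\<bar>a - c\<bar> * \<bar>b\<bar> \<le> M * \<bar>a - c\<bar>"
    using assms by (simp add: mult_right_mono mult.commute[of "\<bar>a - c\<bar>"])
  also have "\<bar>c\<bar> * \<bar>b - d\<bar> \<le> (\<bar>a\<bar> + \<bar>c\<bar>) * \<bar>b - d\<bar>"
    by (simp add: mult_right_mono)
  finally show ?thesis by simp
qed

lemma g2_lipschitz: "\<bar>g2 x - g2 y\<bar> \<le> 2 * Zdist x y"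
  using abs_diff_le_Zdist[of x y] unfolding g2_def by simp

lemma g1_lipschitz:
  assumes "\<bar>x$8\<bar> \<le> M" and "0 \<le> M"
  shows "\<bar>g1 x - g1 y\<bar> \<le> (2 * M + 3) * Zdist x y + 2 * ((\<bar>x$7\<bar> + \<bar>y$7\<bar>) * \<bar>x$8 - y$8\<bar>)"
proof -
  have prod: "\<bar>\<bar>x$7 * x$8\<bar> - \<bar>y$7 * y$8\<bar>\<bar> \<le> M * Zdist x y + (\<bar>x$7\<bar> + \<bar>y$7\<bar>) * \<bar>x$8 - y$8\<bar>"
  proof -
    have "\<bar>\<bar>x$7 * x$8\<bar> - \<bar>y$7 * y$8\<bar>\<bar> \<le> \<bar>x$7 * x$8 - y$7 * y$8\<bar>"
      by (rule abs_triangle_ineq3)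
    also have "\<dots> \<le> M * \<bar>x$7 - y$7\<bar> + (\<bar>x$7\<bar> + \<bar>y$7\<bar>) * \<bar>x$8 - y$8\<bar>"
      using abs_mult_diff_le assms(1) by blast
    also have "M * \<bar>x$7 - y$7\<bar> \<le> M * Zdist x y"
      using abs_diff_le_Zdist(4) assms(2) by (rule mult_left_mono)
    finally show ?thesis by simp
  qed
  have "g1 x - g1 y = (\<bar>x$5\<bar> - \<bar>y$5\<bar>) + 2 * (\<bar>x$7 * x$8\<bar> - \<bar>y$7 * y$8\<bar>) + 2 * (x$4 - y$4)"
    unfolding g1_def by (simp add: algebra_simps)
  then have "\<bar>g1 x - g1 y\<bar>
      \<le> \<bar>\<bar>x$5\<bar> - \<bar>y$5\<bar>\<bar> + 2 * \<bar>\<bar>x$7 * x$8\<bar> - \<bar>y$7 * y$8\<bar>\<bar> + 2 * \<bar>x$4 - y$4\<bar>"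
    using abs_add3_le[of "\<bar>x$5\<bar> - \<bar>y$5\<bar>" "2 * (\<bar>x$7 * x$8\<bar> - \<bar>y$7 * y$8\<bar>)" "2 * (x$4 - y$4)"]
    by (simp only: abs_mult abs_numeral)
  also have "\<dots> \<le> Zdist x y + 2 * (M * Zdist x y + (\<bar>x$7\<bar> + \<bar>y$7\<bar>) * \<bar>x$8 - y$8\<bar>) + 2 * Zdist x y"
    using order_trans[OF abs_triangle_ineq3 abs_diff_le_Zdist(2)] prod abs_diff_le_Zdist(1)
    by (intro add_mono mult_left_mono) auto
  finally show ?thesis by (simp add: algebra_simps)
qed

lemma disjoint_Omega2_Omega1: "x \<in> Omega2 \<Longrightarrow> x \<notin> Omega1"
  unfolding Omega2_def by simp

lemma disjoint_Omega3_Omega1: "x \<in> Omega3 \<Longrightarrow> x \<notin> Omega1"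
  unfolding Omega3_def Omega1_def by simp

lemma g_outside_Omega1: "x \<notin> Omega1 \<Longrightarrow> g x = g2 x"
  unfolding g_def by simp

lemma g_on_Omega_minus: "x \<in> Omega_minus \<Longrightarrow> g x = min (g1 x) (g2 x)"
  unfolding g_def Omega_minus_def Omega1_def by auto

lemma g2_lipschitz_weighted:
  assumes "0 \<le> M"
  shows "\<bar>g2 x - g2 y\<bar> \<le> (2 * M + 3) * Zdist_weighted x y"
proof -
  have "\<bar>g2 x - g2 y\<bar> \<le> 2 * Zdist_weighted x y"
    using g2_lipschitz[of x y] Zdist_le_Zdist_weighted[of x y] by simp
  also have "\<dots> \<le> (2 * M + 3) * Zdist_weighted x y"
    using Zdist_weighted_nonneg assms by (intro mult_right_mono) auto
  finally show ?thesis .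
qed

lemma g1_lipschitz_weighted:
  assumes "\<bar>x$8\<bar> \<le> M" and "0 \<le> M"
  shows "\<bar>g1 x - g1 y\<bar> \<le> (2 * M + 3) * Zdist_weighted x y"
proof -
  define W where "W = (\<bar>x$7\<bar> + \<bar>y$7\<bar>) * \<bar>x$8 - y$8\<bar>"
  have "2 * W \<le> (2 * M + 3) * W"
    using assms(2) unfolding W_def by (intro mult_right_mono) auto
  then have "(2 * M + 3) * Zdist x y + 2 * W \<le> (2 * M + 3) * Zdist_weighted x y"
    unfolding Zdist_weighted_def W_def by (simp add: distrib_left)
  with g1_lipschitz[OF assms, of y] show ?thesis
    unfolding W_def by linarith
qed

lemma g_lipschitz_outside_Omega1:
  assumes "x \<notin> Omega1" and "y \<notin> Omega1" and "0 \<le> M"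
  shows "\<bar>g x - g y\<bar> \<le> (2 * M + 3) * Zdist_weighted x y"
  using assms g2_lipschitz_weighted by (simp add: g_outside_Omega1)

lemma g_lipschitz_on_Omega_minus:
  assumes "x \<in> Omega_minus" and "y \<in> Omega_minus" and "\<bar>x$8\<bar> \<le> M" and "0 \<le> M"
  shows "\<bar>g x - g y\<bar> \<le> (2 * M + 3) * Zdist_weighted x y"
  using assms g1_lipschitz_weighted g2_lipschitz_weighted
  by (simp add: g_on_Omega_minus abs_min_diff_le)

lemma g_lipschitz_on_pieces:
  assumes "(x \<in> Omega2 \<and> y \<in> Omega2) \<or> (x \<in> Omega3 \<and> y \<in> Omega3) \<or>
      (x \<in> Omega_minus \<and> y \<in> Omega_minus)"
    and "\<bar>x$8\<bar> \<le> M" and "0 \<le> M"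
  shows "\<bar>g x - g y\<bar> \<le> (2 * M + 3) * Zdist_weighted x y"
  using assms(1)
proof (elim disjE conjE)
  assume "x \<in> Omega_minus" "y \<in> Omega_minus"
  then show ?thesis using assms(2,3) by (rule g_lipschitz_on_Omega_minus)
qed (use assms(3) disjoint_Omega2_Omega1 disjoint_Omega3_Omega1
       g_lipschitz_outside_Omega1 in blast)+

theorem lemma4p2:
  shows "\<forall>M::real. M > 0 \<longrightarrow> (\<exists>C::real. \<forall>x y :: real ^ 8.
     ((x \<in> Omega2 \<and> y \<in> Omega2) \<or> (x \<in> Omega3 \<and> y \<in> Omega3) \<or>
      (x \<in> Omega_minus \<and> y \<in> Omega_minus)) \<and>
     (\<forall>i. \<bar>x$i\<bar> \<le> M) \<and> (\<forall>i. \<bar>y$i\<bar> \<le> M)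
     \<longrightarrow> \<bar>g x - g y\<bar> \<le> C * (Zdist x y + (\<bar>x$7\<bar> + \<bar>y$7\<bar>) * \<bar>x$8 - y$8\<bar>))"
  unfolding Zdist_weighted_def[symmetric]
  using g_lipschitz_on_pieces less_imp_le by blast

end
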